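(* Let $\mathcal N=(\mathcal L,\mathcal I,D_{\mathcal L})$ be a network and let $R\in\mathcal R^{\mathcal N}$. Then for every $\epsilon>0$ there exists a collision-free schedule $S$ that has some period $T_p\ge 1$, whose rate vector $R_S$ exists, and which satisfies $R_S\succcurlyeq R-\epsilon$.
   Context: A network is a triple $\mathcal N=(\mathcal L,\mathcal I,D_{\mathcal L})$ where $\mathcal L$ is a finite nonempty set (of links); $\mathcal I=(\mathcal I(l))_{l\in\mathcal L}$ is the collision profile, each $\mathcal I(l)$ being a collection of nonempty subsets of $\mathcal L$; and $D_{\mathcal L}$ (the link-wise delay matrix) assigns an integer $D_{\mathcal L}(l,l')$ to every pair $(l,l')$ with $l'\in\phi$ for some $\phi\in\mathcal I(l)$. The character of $\mathcal N$ is $D^*=\max_{l\in\mathcal L}\max_{\phi\in\mathcal I(l)}\max_{l'\in\phi}|D_{\mathcal L}(l,l')|$ (taken to be $0$ if there are no collision sets). A schedule is a map $S:\mathcal L\times\mathbb Z\to\{0,1\}$. For $(l,t)\in\mathcal L\times\mathbb Z$, $S(l,t)$ has a collision if there exists $\phi\in\mathcal I(l)$ such that $S(l',t+D_{\mathcal L}(l,l'))=1$ for every $l'\in\phi$; otherwise $S(l,t)$ is collision free. $S$ is collision free if $S(l,t)$ is collision free for every $(l,t)$ with $S(l,t)=1$. $S$ has period $T_p\ge 1$ if $S(l,t)=S(l,t+T_p)$ for all $(l,t)$. For a schedule $S$ and link $l$, $R_S(l)=\lim_{T\to\infty}\frac1T\sum_{t=0}^{T-1}\iota\big(S(l,t)=1\text{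 and }S(l,t)\text{ is collision free}\big)$ when the limit exists ($\iota$ is the indicator); if it exists for all $l$, $R_S=(R_S(l))_{l\in\mathcal L}$ is the rate vector of $S$. Vectors/matrices are compared entrywise ($A\preccurlyeq B$ iff each entry of $A$ is at most the corresponding entry of $B$), and $R-\epsilon$ means subtracting $\epsilon$ from every entry. A nonnegative vector $R\in[0,\infty)^{\mathcal L}$ is achievable if for every $\epsilon>0$ there is a schedule $S$ whose rate vector exists and satisfies $R_S\succcurlyeq R-\epsilon$; the rate region $\mathcal R^{\mathcal N}$ is the set of all achievable nonnegative vectors. *)

theory Defs
  imports "HOL-Analysis.Analysis"
begin

text \<open>A network (L, I, D): L finite nonempty link set, I l the collision profile
  of link l (collection of nonempty subsets of L), D l l' the integer delay
  (only meaningful when l' lies in some collision set of l).\<close>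

definition network :: "'l set \<Rightarrow> ('l \<Rightarrow> 'l set set) \<Rightarrow> ('l \<Rightarrow> 'l \<Rightarrow> int) \<Rightarrow> bool" where
  "network L I D \<longleftrightarrow> finite L \<and> L \<noteq> {} \<and>
     (\<forall>l\<in>L. \<forall>\<phi>\<in>I l. \<phi> \<noteq> {} \<and> \<phi> \<subseteq> L)"

type_synonym 'l schedule = "'l \<Rightarrow> int \<Rightarrow> bool"

definition has_collision :: "('l \<Rightarrow> 'l set set) \<Rightarrow> ('l \<Rightarrow> 'l \<Rightarrow> int) \<Rightarrow> 'l schedule \<Rightarrow> 'l \<Rightarrow> int \<Rightarrow> bool" where
  "has_collision I D S l t \<longleftrightarrow> (\<exists>\<phi>\<in>I l. \<forall>l'\<in>\<phi>. S l' (t + D l l'))"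

definition collision_free_sched :: "'l set \<Rightarrow> ('l \<Rightarrow> 'l set set) \<Rightarrow> ('l \<Rightarrow> 'l \<Rightarrow> int) \<Rightarrow> 'l schedule \<Rightarrow> bool" where
  "collision_free_sched L I D S \<longleftrightarrow> (\<forall>l\<in>L. \<forall>t. S l t \<longrightarrow> \<not> has_collision I D S l t)"

definition has_period :: "'l set \<Rightarrow> 'l schedule \<Rightarrow> nat \<Rightarrow> bool" where
  "has_period L S Tp \<longleftrightarrow> Tp \<ge> 1 \<and> (\<forall>l\<in>L. \<forall>t. S l t = S l (t + int Tp))"

definition succ_count :: "('l \<Rightarrow> 'l set set) \<Rightarrow> ('l \<Rightarrow> 'l \<Rightarrow> int) \<Rightarrow> 'l schedule \<Rightarrow> 'l \<Rightarrow> nat \<Rightarrow> real" where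
  "succ_count I D S l T = real (card {t \<in> {0..<T}. S l (int t) \<and> \<not> has_collision I D S l (int t)})"

definition link_rate :: "('l \<Rightarrow> 'l set set) \<Rightarrow> ('l \<Rightarrow> 'l \<Rightarrow> int) \<Rightarrow> 'l schedule \<Rightarrow> 'l \<Rightarrow> real \<Rightarrow> bool" where
  "link_rate I D S l r \<longleftrightarrow> ((\<lambda>T. succ_count I D S l T / real T) \<longlongrightarrow> r) sequentially"

definition rate_vector :: "'l set \<Rightarrow> ('l \<Rightarrow> 'l set set) \<Rightarrow> ('l \<Rightarrow> 'l \<Rightarrow> int) \<Rightarrow> 'l schedule \<Rightarrow> ('l \<Rightarrow> real) \<Rightarrow> bool" where
  "rate_vector L I D S Rs \<longleftrightarrow> (\<forall>l\<in>L. link_rate I D S l (Rs l))"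

definition achievable :: "'l set \<Rightarrow> ('l \<Rightarrow> 'l set set) \<Rightarrow> ('l \<Rightarrow> 'l \<Rightarrow> int) \<Rightarrow> ('l \<Rightarrow> real) \<Rightarrow> bool" where
  "achievable L I D R \<longleftrightarrow> (\<forall>l\<in>L. R l \<ge> 0) \<and>
     (\<forall>\<epsilon>>0. \<exists>S Rs. rate_vector L I D S Rs \<and> (\<forall>l\<in>L. Rs l \<ge> R l - \<epsilon>))"

definition rate_region :: "'l set \<Rightarrow> ('l \<Rightarrow> 'l set set) \<Rightarrow> ('l \<Rightarrow> 'l \<Rightarrow> int) \<Rightarrow> ('l \<Rightarrow> real) set" where
  "rate_region L I D = {R. achievable L I D R}"

end

(*
  Start from a schedule S whose rates are within \<epsilon>/2 of R and choose a window [0, T)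
  over which its empirical success frequencies are within \<epsilon>/4 of those rates.
  Keep the successful transmissions of S in the window that lie at least G slots away
  from its ends, G bounding all delays, and repeat this pattern with period T.
  A collision of a kept transmission only involves slots of the same copy of the window,
  where the new schedule is contained in S, so it would already be a collision of S.
  Being periodic and collision free, the new schedule has a rate vector, and discarding
  the 2G border slots costs at most 2G/T, which is below \<epsilon>/4 for large T.
*)

theory Submission
  imports Defs
begin

lemma card_filter_upto_add_period:
  fixes f :: "nat \<Rightarrow> bool"
  assumes periodic: "\<And>n. f (n + T) = f n"
  shows "card {t \<in> {0..<T + m}. f t} = card {t \<in> {0..<T}. f t} + card {t \<in> {0..<m}. f t}"
proof -
  have "{t \<in> {0..<T + m}. f t} = {t \<in> {0..<T}. f t} \<union> (\<lambda>t. t + T) ` {t \<in> {0..<m}. f t}"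
  proof (intro set_eqI iffI)
    fix x assume "x \<in> {t \<in> {0..<T + m}. f t}"
    then show "x \<in> {t \<in> {0..<T}. f t} \<union> (\<lambda>t. t + T) ` {t \<in> {0..<m}. f t}"
      using periodic[of "x - T"] by (cases "x < T") (auto intro!: image_eqI[of x _ "x - T"])
  qed (auto simp: periodic)
  moreover have "card ((\<lambda>t. t + T) ` {t \<in> {0..<m}. f t}) = card {t \<in> {0..<m}. f t}"
    by (simp add: card_image)
  moreover have "{t \<in> {0..<T}. f t} \<inter> (\<lambda>t. t + T) ` {t \<in> {0..<m}. f t} = {}"
    by auto
  ultimately show ?thesis
    by (simp add: card_Un_disjoint)
qed

lemma card_filter_upto_periodic:
  fixes f :: "nat \<Rightarrow> bool"
  assumes periodic: "\<And>n. f (n + T) = f n"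
  shows "card {t \<in> {0..<k * T + r}. f t} = k * card {t \<in> {0..<T}. f t} + card {t \<in> {0..<r}. f t}"
proof (induction k)
  case (Suc k)
  have "card {t \<in> {0..<Suc k * T + r}. f t} = card {t \<in> {0..<T + (k * T + r)}. f t}"
    by (simp add: add.assoc)
  also have "\<dots> = card {t \<in> {0..<T}. f t} + card {t \<in> {0..<k * T + r}. f t}"
    using periodic by (rule card_filter_upto_add_period)
  finally show ?case using Suc.IH by simp
qed simp

lemma card_filter_upto_le: "card {t \<in> {0..<n}. f t} \<le> n"
  by (rule order_trans[OF card_mono[of "{0..<n}"]]) auto

lemma tendsto_frequency_periodic:
  fixes f :: "nat \<Rightarrow> bool"
  assumes periodic: "\<And>n. f (n + T) = f n" and "T > 0"
  shows "(\<lambda>N. real (card {t \<in> {0..<N}. f t}) / real N)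
           \<longlonglongrightarrow> real (card {t \<in> {0..<T}. f t}) / real T"
proof -
  define c where "c = card {t \<in> {0..<T}. f t}"
  have "c \<le> T"
    unfolding c_def by (rule card_filter_upto_le)
  have close: "\<bar>real (card {t \<in> {0..<N}. f t}) / real N - real c / real T\<bar> \<le> real T / real N"
    if "N > 0" for N
  proof -
    define r where "r = N mod T"
    define cr where "cr = card {t \<in> {0..<r}. f t}"
    have N: "real N = real (N div T) * real T + real r"
      unfolding r_def by (metis div_mult_mod_eq of_nat_add of_nat_mult)
    have "cr \<le> r"
      unfolding cr_def by (rule card_filter_upto_le)
    moreover have "r < T"
      unfolding r_def using \<open>T > 0\<close> by simp
    moreover have "real r * real c / real T \<le> real r"
      using \<open>c \<le> T\<close> \<open>T > 0\<close> by (simp add: field_simps mult_right_mono)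
    moreover have "0 \<le> real r * real c / real T"
      by simp
    ultimately have deviation: "\<bar>real cr - real r * real c / real T\<bar> \<le> real T"
      by linarith
    have "card {t \<in> {0..<N}. f t} = (N div T) * c + cr"
      unfolding c_def cr_def r_def
      using card_filter_upto_periodic[of f T "N div T" "N mod T"] periodic by simp
    then have deviation_eq: "real (card {t \<in> {0..<N}. f t}) - real N * real c / real T
               = real cr - real r * real c / real T"
      using \<open>T > 0\<close> unfolding N by (simp add: field_simps)
    have "real (card {t \<in> {0..<N}. f t}) / real N - real c / real T
               = (real (card {t \<in> {0..<N}. f t}) - real N * real c / real T) / real N"
      using that by (simp add: field_simps)
    then show ?thesis
      using deviation deviation_eq that by (simp add: divide_right_mono)
  qed
  have "(\<lambda>N. real (card {t \<in> {0..<N}. f t}) / real N - real c / real T) \<longlonglongrightarrow> 0"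
  proof (rule Lim_null_comparison[OF _ lim_const_over_n[of "real T"]])
    show "\<forall>\<^sub>F N in sequentially.
        norm (real (card {t \<in> {0..<N}. f t}) / real N - real c / real T) \<le> real T / real N"
      using eventually_gt_at_top[of 0] by (rule eventually_mono) (simp only: real_norm_def close)
  qed
  then show ?thesis
    unfolding c_def by (simp add: LIM_zero_iff)
qed

lemma network_delays_bounded:
  assumes "network L I D"
  obtains G :: nat
  where "\<And>l \<phi> l'. l \<in> L \<Longrightarrow> \<phi> \<in> I l \<Longrightarrow> l' \<in> \<phi> \<Longrightarrow> \<bar>D l l'\<bar> \<le> int G"
proof
  have "finite (L \<times> L)"
    using assms unfolding network_def by simp
  then have bound: "\<bar>D l l'\<bar> \<le> Max ((\<lambda>(l, l'). \<bar>D l l'\<bar>) ` (L \<times> L))"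
    if "l \<in> L" "l' \<in> L" for l l'
    using that by (intro Max_ge) auto
  fix l \<phi> l' assume "l \<in> L" "\<phi> \<in> I l" "l' \<in> \<phi>"
  moreover have "l' \<in> L"
    using assms \<open>\<phi> \<in> I l\<close> \<open>l' \<in> \<phi>\<close> \<open>l \<in> L\<close> unfolding network_def by blast
  ultimately show "\<bar>D l l'\<bar> \<le> int (nat (Max ((\<lambda>(l, l'). \<bar>D l l'\<bar>) ` (L \<times> L))))"
    using bound by fastforce
qed

definition guarded_window ::
    "('l \<Rightarrow> 'l set set) \<Rightarrow> ('l \<Rightarrow> 'l \<Rightarrow> int) \<Rightarrow> 'l schedule \<Rightarrow> nat \<Rightarrow> nat \<Rightarrow> 'l schedule" where
  "guarded_window I D S G T l t \<longleftrightarrow>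
     (let u = t mod int T in int G \<le> u \<and> u + int G < int T \<and> S l u \<and> \<not> has_collision I D S l u)"

lemma has_period_guarded_window:
  "T \<ge> 1 \<Longrightarrow> has_period L (guarded_window I D S G T) T"
  unfolding has_period_def guarded_window_def by simp

lemma collision_free_guarded_window:
  assumes delays: "\<And>l \<phi> l'. l \<in> L \<Longrightarrow> \<phi> \<in> I l \<Longrightarrow> l' \<in> \<phi> \<Longrightarrow> \<bar>D l l'\<bar> \<le> int G"
  shows "collision_free_sched L I D (guarded_window I D S G T)"
  unfolding collision_free_sched_def
proof (intro ballI allI impI notI)
  fix l t
  assume "l \<in> L" and scheduled: "guarded_window I D S G T l t"
    and "has_collision I D (guarded_window I D S G T) l t"
  then obtain \<phi> where "\<phi> \<in> I l"
    and jammed: "\<And>l'. l' \<in> \<phi> \<Longrightarrow> guarded_window I D S G T l' (t + D l l')"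
    unfolding has_collision_def by blast
  define u where "u = t mod int T"
  have u: "int G \<le> u" "u + int G < int T" "S l u" "\<not> has_collision I D S l u"
    using scheduled unfolding guarded_window_def u_def Let_def by auto
  have "S l' (u + D l l')" if "l' \<in> \<phi>" for l'
  proof -
    have "0 \<le> u + D l l'" "u + D l l' < int T"
      using u delays[OF \<open>l \<in> L\<close> \<open>\<phi> \<in> I l\<close> that] by auto
    then have "(t + D l l') mod int T = u + D l l'"
      unfolding u_def by (metis mod_add_left_eq mod_pos_pos_trivial)
    then show ?thesis
      using jammed[OF that] unfolding guarded_window_def Let_def by simp
  qed
  then have "has_collision I D S l u"
    unfolding has_collision_def using \<open>\<phi> \<in> I l\<close> by blast
  with u show False
    by blast
qed

lemma rate_vector_periodic:
  assumes "collision_free_sched L I D S" and "has_period L S T"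
  shows "rate_vector L I D S (\<lambda>l. real (card {t \<in> {0..<T}. S l (int t)}) / real T)"
  unfolding rate_vector_def link_rate_def
proof
  fix l assume "l \<in> L"
  then have successful:
    "{t \<in> {0..<N}. S l (int t) \<and> \<not> has_collision I D S l (int t)} = {t \<in> {0..<N}. S l (int t)}" for N
    using assms(1) unfolding collision_free_sched_def by auto
  have succ: "succ_count I D S l N = real (card {t \<in> {0..<N}. S l (int t)})" for N
    unfolding succ_count_def successful ..
  have "S l (int (n + T)) = S l (int n)" for n
    using assms(2) \<open>l \<in> L\<close> unfolding has_period_def by (metis of_nat_add)
  moreover have "T > 0"
    using assms(2) unfolding has_period_def by simp
  ultimately show "(\<lambda>N. succ_count I D S l N / real N)
      \<longlonglongrightarrow> real (card {t \<in> {0..<T}. S l (int t)}) / real T"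
    unfolding succ by (rule tendsto_frequency_periodic)
qed

lemma succ_count_le_guarded_window:
  assumes "2 * G \<le> T"
  shows "succ_count I D S l T
    \<le> real (card {t \<in> {0..<T}. guarded_window I D S G T l (int t)}) + 2 * real G"
proof -
  define kept where "kept = {t \<in> {0..<T}. guarded_window I D S G T l (int t)}"
  have "{t \<in> {0..<T}. S l (int t) \<and> \<not> has_collision I D S l (int t)}
      \<subseteq> kept \<union> {0..<G} \<union> {T - G..<T}"
    unfolding kept_def guarded_window_def by auto
  then have "card {t \<in> {0..<T}. S l (int t) \<and> \<not> has_collision I D S l (int t)}
      \<le> card (kept \<union> {0..<G} \<union> {T - G..<T})"
    by (rule card_mono[rotated]) (simp add: kept_def)
  also have "\<dots> \<le> card kept + card {0..<G} + card {T - G..<T}"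
    by (meson card_Un_le add_le_mono1 order_trans)
  also have "\<dots> = card kept + 2 * G"
    using assms by simp
  finally show ?thesis
    unfolding succ_count_def kept_def by linarith
qed

lemma eventually_success_frequency_gt:
  assumes "finite L" and "rate_vector L I D S Rs" and "\<delta> > 0"
  shows "\<forall>\<^sub>F T in sequentially. \<forall>l\<in>L. succ_count I D S l T / real T > Rs l - \<delta>"
  using assms(1)
proof (rule eventually_ball_finite, intro ballI)
  fix l assume "l \<in> L"
  then have "(\<lambda>T. succ_count I D S l T / real T) \<longlonglongrightarrow> Rs l"
    using assms(2) unfolding rate_vector_def link_rate_def by blast
  then show "\<forall>\<^sub>F T in sequentially. succ_count I D S l T / real T > Rs l - \<delta>"
    by (rule order_tendstoD(1)) (use assms(3) in simp)
qed

theorem theorem1: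
  fixes L :: "'l set" and I :: "'l \<Rightarrow> 'l set set" and D :: "'l \<Rightarrow> 'l \<Rightarrow> int"
    and R :: "'l \<Rightarrow> real" and \<epsilon> :: real
  assumes "network L I D"
    and "R \<in> rate_region L I D"
    and "\<epsilon> > 0"
  shows "\<exists>S Tp Rs. collision_free_sched L I D S \<and> has_period L S Tp \<and>
           rate_vector L I D S Rs \<and> (\<forall>l\<in>L. Rs l \<ge> R l - \<epsilon>)"
proof -
  obtain S Rs where rates: "rate_vector L I D S Rs"
    and close: "\<And>l. l \<in> L \<Longrightarrow> Rs l \<ge> R l - \<epsilon> / 2"
    using assms(2,3) half_gt_zero unfolding rate_region_def achievable_def by blast
  obtain G
    where delays: "\<And>l \<phi> l'. l \<in> L \<Longrightarrow> \<phi> \<in> I l \<Longrightarrow> l' \<in> \<phi> \<Longrightarrow> \<bar>D l l'\<bar> \<le> int G"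
    using network_delays_bounded[OF assms(1)] by blast
  have "\<forall>\<^sub>F T in sequentially. (\<forall>l\<in>L. succ_count I D S l T / real T > Rs l - \<epsilon> / 4) \<and>
      2 * real G / real T < \<epsilon> / 4 \<and> 2 * G < T"
    using assms(1,3) rates unfolding network_def
    by (intro eventually_conj eventually_success_frequency_gt eventually_gt_at_top
        order_tendstoD(2)[OF lim_const_over_n]) simp_all
  then obtain T where T: "\<forall>l\<in>L. succ_count I D S l T / real T > Rs l - \<epsilon> / 4"
    "2 * real G / real T < \<epsilon> / 4" "2 * G < T"
    unfolding eventually_sequentially by blast
  define S' where "S' = guarded_window I D S G T"
  have "collision_free_sched L I D S'" and "has_period L S' T"
    unfolding S'_def using delays T(3)
    by (auto intro: collision_free_guarded_window has_period_guarded_window)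
  moreover have "real (card {t \<in> {0..<T}. S' l (int t)}) / real T \<ge> R l - \<epsilon>" if "l \<in> L" for l
  proof -
    have "succ_count I D S l T / real T
        \<le> (real (card {t \<in> {0..<T}. S' l (int t)}) + 2 * real G) / real T"
      unfolding S'_def using T(3) by (intro divide_right_mono succ_count_le_guarded_window) simp_all
    moreover have "succ_count I D S l T / real T > Rs l - \<epsilon> / 4"
      using T(1) that by blast
    ultimately show ?thesis
      using T(2) close[OF that] unfolding add_divide_distrib by linarith
  qed
  ultimately show ?thesis
    using rate_vector_periodic by blast
qed

end
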